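(* Consider the equioriented quiver $1'\xrightarrow{a_0}1\xrightarrow{a_1}2\to\cdots\to r\xrightarrow{a_r}r+1$, with dimension $m$ at the framed vertex $1'$ and dimension $n$ at the nonframed vertices $1,\dots,r+1$, with the complete standard filtration at the nonframed vertices. Then $F^{\bullet}Rep(Q,\beta)=M_{n\times m}\oplus\mathfrak{b}^{\oplus r}$, and for every $1\le p\le n$, every $0\le k\le r$ and every $1\le i_1<\cdots<i_{n-p+1}\le m$, the minor of the $n\times m$ matrix $A_kA_{k-1}\cdots A_0$ with rows $p,p+1,\dots,n$ and columns $i_1,\dots,i_{n-p+1}$ is a $\mathbb{U}_\beta$-invariant polynomial.
   Context: The representation space consists of tuples $(A_0,A_1,\dots,A_r)$ with $A_0\in M_{n\times m}$ an arbitrary complex $n\times m$ matrix (no filtration at the framed vertex) and $A_1,\dots,A_r$ upper triangular $n\times n$ matrices ($\mathfrak{b}$ the upper triangular matrices). $\mathbb{U}_\beta=U^{r+1}$, with $U$ the upper unitriangular $n\times n$ matrices, acting by $(u_1,\dots,u_{r+1})\cdot(A_0,A_1,\dots,A_r)=(u_1A_0,u_2A_1u_1^{-1},\dots,u_{r+1}A_ru_r^{-1})$. *)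

theory Defs
  imports "Jordan_Normal_Form.Gauss_Jordan_Elimination" "Jordan_Normal_Form.DL_Submatrix"
    "Jordan_Normal_Form.Determinant"
begin

definition unitriangular :: "nat \<Rightarrow> complex mat \<Rightarrow> bool" where
  "unitriangular n u \<longleftrightarrow> u \<in> carrier_mat n n \<and> upper_triangular u \<and> (\<forall>i<n. u $$ (i,i) = 1)"

text \<open>Inverse matrix (via Gauss-Jordan); for unitriangular matrices it exists.\<close>
definition minv :: "complex mat \<Rightarrow> complex mat" where
  "minv u = the (mat_inverse u)"

text \<open>The filtered representation space: tuples (A_0,...,A_r), A_0 arbitrary n x m,
  A_1..A_r upper triangular n x n (i.e. M_{n x m} + b^r).\<close>
definition FRep :: "nat \<Rightarrow> nat \<Rightarrow> nat \<Rightarrow> (nat \<Rightarrow> complex mat) set" where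
  "FRep n m r = {A. A 0 \<in> carrier_mat n m \<and>
     (\<forall>k\<in>{1..r}. A k \<in> carrier_mat n n \<and> upper_triangular (A k))}"

text \<open>The group U_beta = U^(r+1), elements indexed u_1..u_{r+1}.\<close>
definition Ubeta :: "nat \<Rightarrow> nat \<Rightarrow> (nat \<Rightarrow> complex mat) set" where
  "Ubeta n r = {u. \<forall>k\<in>{1..r+1}. unitriangular n (u k)}"

definition act :: "(nat \<Rightarrow> complex mat) \<Rightarrow> (nat \<Rightarrow> complex mat) \<Rightarrow> (nat \<Rightarrow> complex mat)" where
  "act u A = (\<lambda>k. if k = 0 then u 1 * A 0 else u (k+1) * A k * minv (u k))"

fun pathprod :: "(nat \<Rightarrow> complex mat) \<Rightarrow> nat \<Rightarrow> complex mat" where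
  "pathprod A 0 = A 0"
| "pathprod A (Suc k) = A (Suc k) * pathprod A k"

text \<open>Minor with rows p..n and columns i_1<...<i_{n-p+1} (1-based indices).\<close>
definition minor :: "nat \<Rightarrow> nat \<Rightarrow> (nat \<Rightarrow> nat) \<Rightarrow> complex mat \<Rightarrow> complex" where
  "minor n p i X = det (submatrix X {p-1..<n} ((\<lambda>j. i j - 1) ` {1..n-p+1}))"

end

theory Submission
  imports Defs
begin

text \<open>
  The action telescopes along the path: the inner factors \<open>u\<^sub>j\<^sup>-\<^sup>1 u\<^sub>j\<close> cancel, so
  \<open>(u\<cdot>A)\<^sub>k \<cdots> (u\<cdot>A)\<^sub>0 = u\<^sub>k\<^sub>+\<^sub>1 A\<^sub>k \<cdots> A\<^sub>0\<close>. Because \<open>u\<^sub>k\<^sub>+\<^sub>1\<close> is upper triangular,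
  the rows \<open>p, \<dots>, n\<close> of \<open>u\<^sub>k\<^sub>+\<^sub>1 X\<close> only involve the rows \<open>p, \<dots>, n\<close> of \<open>X\<close>, through the
  lower right diagonal block of \<open>u\<^sub>k\<^sub>+\<^sub>1\<close>. That block is unitriangular, hence of
  determinant 1, so every minor on these rows is unchanged, whichever columns are chosen.
\<close>

lemma upper_triangular_mult:
  fixes A B :: "'a :: semiring_0 mat"
  assumes A: "A \<in> carrier_mat n n" "upper_triangular A"
    and B: "B \<in> carrier_mat n n" "upper_triangular B"
  shows "upper_triangular (A * B)"
proof (rule upper_triangularI)
  fix i j assume ij: "j < i" "i < dim_row (A * B)"
  have "(A * B) $$ (i,j) = (\<Sum>l<n. A $$ (i,l) * B $$ (l,j))"
    using A B ij by (auto simp: scalar_prod_def atLeast0LessThan intro!: sum.cong)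
  also have "\<dots> = 0"
  proof (rule sum.neutral, intro ballI)
    fix l assume l: "l \<in> {..<n}"
    show "A $$ (i,l) * B $$ (l,j) = 0"
    proof (cases "l < i")
      case True
      then show ?thesis using upper_triangularD[OF A(2), of l i] A ij by simp
    next
      case False
      then show ?thesis using upper_triangularD[OF B(2), of j l] B ij l by simp
    qed
  qed
  finally show "(A * B) $$ (i,j) = 0" .
qed

lemma upper_triangular_right_inverse:
  fixes u B :: "'a :: ring_1 mat"
  assumes u: "u \<in> carrier_mat n n" "upper_triangular u" "\<forall>i<n. u $$ (i,i) = 1"
    and B: "B \<in> carrier_mat n n" "u * B = 1\<^sub>m n"
  shows "upper_triangular B"
proof (rule upper_triangularI)
  fix i j assume "j < i" "i < dim_row B"
  then have "i < n" "j < i" using B by auto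
  then show "B $$ (i,j) = 0"
  proof (induction "n - i" arbitrary: i rule: less_induct)
    case less
    have "0 = (u * B) $$ (i,j)" using B less.prems by simp
    also have "\<dots> = (\<Sum>l<n. u $$ (i,l) * B $$ (l,j))"
      using u(1) B(1) less.prems by (auto simp: scalar_prod_def atLeast0LessThan intro!: sum.cong)
    also have "\<dots> = u $$ (i,i) * B $$ (i,j) + (\<Sum>l\<in>{..<n} - {i}. u $$ (i,l) * B $$ (l,j))"
      using less.prems by (subst sum.remove[of _ i]) auto
    also have "(\<Sum>l\<in>{..<n} - {i}. u $$ (i,l) * B $$ (l,j)) = 0"
    proof (rule sum.neutral, intro ballI)
      fix l assume l: "l \<in> {..<n} - {i}"
      show "u $$ (i,l) * B $$ (l,j) = 0"
      proof (cases "l < i")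
        case True
        then show ?thesis using upper_triangularD[OF u(2), of l i] u(1) less.prems by simp
      next
        case False
        with l less.prems have "n - l < n - i" "l < n" "j < l" by auto
        then show ?thesis using less.hyps by simp
      qed
    qed
    finally show "B $$ (i,j) = 0" using u less.prems by simp
  qed
qed

lemma unitriangular_minv:
  assumes "unitriangular n u"
  shows "u * minv u = 1\<^sub>m n" "minv u * u = 1\<^sub>m n" "minv u \<in> carrier_mat n n"
    "upper_triangular (minv u)"
proof -
  have u: "u \<in> carrier_mat n n" "upper_triangular u" "\<forall>i<n. u $$ (i,i) = 1"
    using assms unfolding unitriangular_def by auto
  have "det u = 1"
    using u by (simp add: det_upper_triangular[OF u(2,1)] prod_list_diag_prod)
  then have "mat_inverse u \<noteq> None"
    using mat_inverse(1)[OF u(1), where b = "()"] det_non_zero_imp_unit[OF u(1), where b = "()"]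
    by auto
  then obtain B where "mat_inverse u = Some B" by auto
  then show inv: "u * minv u = 1\<^sub>m n" "minv u * u = 1\<^sub>m n" "minv u \<in> carrier_mat n n"
    using mat_inverse(2)[OF u(1)] unfolding minv_def by auto
  show "upper_triangular (minv u)"
    using upper_triangular_right_inverse[OF u inv(3,1)] .
qed

lemma pick_atLeastLessThan: "c < b - a \<Longrightarrow> pick {a..<b} c = a + c"
  by (induction c) (auto intro!: Least_equality)

lemma card_bounded_atLeastLessThan: "card {i. i < n \<and> i \<in> {q..<n}} = n - q"
proof -
  have "{i. i < n \<and> i \<in> {q..<n}} = {q..<n}" by auto
  then show ?thesis by simp
qed

lemma dim_submatrix_tail:
  "dim_row X = n \<Longrightarrow> dim_row (submatrix X {q..<n} J) = n - q"
  "dim_col X = n \<Longrightarrow> dim_col (submatrix X I {q..<n}) = n - q"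
  by (simp_all only: dim_submatrix card_bounded_atLeastLessThan)

lemma index_submatrix_tail_rows:
  assumes "dim_row X = n" "a < n - q" "b < dim_col (submatrix X {q..<n} J)"
  shows "submatrix X {q..<n} J $$ (a,b) = X $$ (q + a, pick J b)" "pick J b < dim_col X"
  using assms card_bounded_atLeastLessThan[of n q]
  by (simp_all only: dim_submatrix submatrix_index pick_atLeastLessThan pick_le)

lemma submatrix_tail_rows_mult_upper_triangular:
  fixes u X :: "'a :: semiring_0 mat"
  assumes u: "u \<in> carrier_mat n n" "upper_triangular u" and X: "dim_row X = n" and q: "q \<le> n"
  shows "submatrix (u * X) {q..<n} J = submatrix u {q..<n} {q..<n} * submatrix X {q..<n} J"
    (is "?L = ?U * ?X")
proof (rule eq_matI)
  have dims: "dim_row ?L = n - q" "dim_row ?U = n - q" "dim_col ?U = n - q" "dim_row ?X = n - q"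
    "dim_col ?L = dim_col ?X"
    using u X by (simp_all add: dim_submatrix_tail) (simp add: dim_submatrix)
  then show "dim_row ?L = dim_row (?U * ?X)" "dim_col ?L = dim_col (?U * ?X)" by simp_all
  fix a b assume "a < dim_row (?U * ?X)" "b < dim_col (?U * ?X)"
  then have a: "a < n - q" and b: "b < dim_col ?X" using dims by auto
  have j: "pick J b < dim_col X" using index_submatrix_tail_rows[OF X a b] by simp
  have "?L $$ (a,b) = (\<Sum>l<n. u $$ (q + a, l) * X $$ (l, pick J b))"
    using index_submatrix_tail_rows[of "u * X" n a q b J] u X a b j dims
    by (auto simp: scalar_prod_def atLeast0LessThan intro!: sum.cong)
  also have "\<dots> = (\<Sum>l\<in>{q..<n}. u $$ (q + a, l) * X $$ (l, pick J b))"
    \<comment> \<open>the columns \<open>l < q\<close> of row \<open>q + a \<ge> q\<close> of \<open>u\<close> vanish\<close>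
    using u a by (intro sum.mono_neutral_right) (auto simp: upper_triangularD[OF u(2)])
  also have "\<dots> = (\<Sum>t<n - q. u $$ (q + a, q + t) * X $$ (q + t, pick J b))"
    using q by (intro sum.reindex_bij_witness[of _ "\<lambda>t. q + t" "\<lambda>l. l - q"]) auto
  also have "\<dots> = (?U * ?X) $$ (a,b)"
  proof -
    have "?U $$ (a,t) * ?X $$ (t,b) = u $$ (q + a, q + t) * X $$ (q + t, pick J b)"
      if "t < n - q" for t
      using index_submatrix_tail_rows[of u n a q t "{q..<n}"] index_submatrix_tail_rows[OF X that b]
        pick_atLeastLessThan[of t n q] u a that dims by auto
    then show ?thesis
      using a b dims by (auto simp: scalar_prod_def atLeast0LessThan intro!: sum.cong)
  qed
  finally show "?L $$ (a,b) = (?U * ?X) $$ (a,b)" .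
qed

lemma det_submatrix_tail_unitriangular:
  fixes u :: "'a :: comm_ring_1 mat"
  assumes u: "u \<in> carrier_mat n n" "upper_triangular u" "\<forall>i<n. u $$ (i,i) = 1" and q: "q \<le> n"
  shows "det (submatrix u {q..<n} {q..<n}) = 1"
proof -
  let ?U = "submatrix u {q..<n} {q..<n}"
  have U: "?U \<in> carrier_mat (n - q) (n - q)"
    using u(1) by (intro carrier_matI dim_submatrix_tail) auto
  have entries: "?U $$ (a,b) = u $$ (q + a, q + b)" if "a < n - q" "b < n - q" for a b
    using index_submatrix_tail_rows[of u n a q b "{q..<n}"] pick_atLeastLessThan[of b n q] U u that
    by auto
  have "upper_triangular ?U"
  proof (rule upper_triangularI)
    fix a b assume "b < a" "a < dim_row ?U"
    then show "?U $$ (a,b) = 0"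
      using U u(1) entries upper_triangularD[OF u(2), of "q + b" "q + a"] by simp
  qed
  then have "det ?U = (\<Prod>a<n - q. ?U $$ (a,a))"
    using U by (simp add: det_upper_triangular prod_list_diag_prod atLeast0LessThan)
  also have "\<dots> = 1"
    using u(3) entries by (intro prod.neutral) simp
  finally show ?thesis .
qed

lemma det_submatrix_tail_rows_mult_unitriangular:
  fixes u X :: "'a :: comm_ring_1 mat"
  assumes u: "u \<in> carrier_mat n n" "upper_triangular u" "\<forall>i<n. u $$ (i,i) = 1"
    and X: "dim_row X = n" and q: "q \<le> n"
  shows "det (submatrix (u * X) {q..<n} J) = det (submatrix X {q..<n} J)"
proof -
  let ?U = "submatrix u {q..<n} {q..<n}" and ?X = "submatrix X {q..<n} J"
  have U: "?U \<in> carrier_mat (n - q) (n - q)"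
    using u(1) by (intro carrier_matI dim_submatrix_tail) auto
  have "det (submatrix (u * X) {q..<n} J) = det (?U * ?X)"
    using submatrix_tail_rows_mult_upper_triangular[OF u(1,2) X q] by simp
  also have "\<dots> = det ?X"
  proof (cases "dim_col ?X = n - q")
    case True
    then have "?X \<in> carrier_mat (n - q) (n - q)"
      using X by (intro carrier_matI dim_submatrix_tail) auto
    then show ?thesis
      using det_mult[OF U] det_submatrix_tail_unitriangular[OF u q] by simp
  next
    case False
    \<comment> \<open>a non-square minor is \<open>0\<close> by the convention of \<open>det\<close>\<close>
    then show ?thesis
      using U X dim_submatrix_tail(1)[OF X] by (simp add: det_def)
  qed
  finally show ?thesis .
qed

lemma act_in_FRep:
  assumes A: "A \<in> FRep n m r" and u: "u \<in> Ubeta n r"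
  shows "act u A \<in> FRep n m r"
  unfolding FRep_def
proof (intro CollectI conjI ballI)
  have "unitriangular n (u 1)" using u unfolding Ubeta_def by auto
  then show "act u A 0 \<in> carrier_mat n m"
    using A unfolding act_def FRep_def unitriangular_def by auto
next
  fix j assume j: "j \<in> {1..r}"
  then have uj: "unitriangular n (u j)" "unitriangular n (u (j + 1))"
    using u unfolding Ubeta_def by auto
  then have c: "u j \<in> carrier_mat n n" "u (j + 1) \<in> carrier_mat n n" "upper_triangular (u (j + 1))"
    unfolding unitriangular_def by auto
  have Aj: "A j \<in> carrier_mat n n" "upper_triangular (A j)"
    using A j unfolding FRep_def by auto
  have act: "act u A j = u (j + 1) * A j * minv (u j)"
    using j unfolding act_def by auto
  show "act u A j \<in> carrier_mat n n"
    using c Aj unitriangular_minv(3)[OF uj(1)] unfolding act by auto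
  show "upper_triangular (act u A j)"
    unfolding act using c Aj unitriangular_minv(3,4)[OF uj(1)]
    by (intro upper_triangular_mult[of _ n]) (auto intro: upper_triangular_mult)
qed

lemma pathprod_carrier:
  assumes "A \<in> FRep n m r" "k \<le> r"
  shows "pathprod A k \<in> carrier_mat n m"
  using assms(2)
proof (induction k)
  case 0
  then show ?case using assms(1) unfolding FRep_def by simp
next
  case (Suc k)
  then have "A (Suc k) \<in> carrier_mat n n" using assms(1) unfolding FRep_def by simp
  with Suc show ?case by simp
qed

lemma pathprod_act:
  assumes A: "A \<in> FRep n m r" and u: "u \<in> Ubeta n r" and "k \<le> r"
  shows "pathprod (act u A) k = u (k + 1) * pathprod A k"
  using assms(3)
proof (induction k)
  case 0
  then show ?case by (simp add: act_def)
next
  case (Suc k)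
  let ?P = "pathprod A k" and ?B = "A (Suc k)" and ?v = "u (Suc k)" and ?w = "u (Suc k + 1)"
  have P: "?P \<in> carrier_mat n m" using pathprod_carrier[OF A] Suc.prems by simp
  have B: "?B \<in> carrier_mat n n" using A Suc.prems unfolding FRep_def by simp
  have "unitriangular n ?v" "unitriangular n ?w" using u Suc.prems unfolding Ubeta_def by auto
  then have v: "?v \<in> carrier_mat n n" "minv ?v * ?v = 1\<^sub>m n" "minv ?v \<in> carrier_mat n n"
    and w: "?w \<in> carrier_mat n n"
    using unitriangular_minv unfolding unitriangular_def by auto
  have "pathprod (act u A) (Suc k) = (?w * ?B * minv ?v) * (?v * ?P)"
    using Suc by (simp add: act_def)
  also have "\<dots> = (?w * ?B * minv ?v * ?v) * ?P"
    using v w B P by (intro assoc_mult_mat[symmetric]) auto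
  also have "?w * ?B * minv ?v * ?v = ?w * ?B * (minv ?v * ?v)"
    using v w B by (intro assoc_mult_mat) auto
  also have "\<dots> = ?w * ?B"
    using v w B by simp
  also have "?w * ?B * ?P = ?w * (?B * ?P)"
    using assoc_mult_mat[OF w B P] .
  finally show ?case by simp
qed

theorem mainTheorem6:
  fixes n m r p k :: nat and i :: "nat \<Rightarrow> nat"
  assumes "1 \<le> p" "p \<le> n" "k \<le> r"
    and "strict_mono_on {1..n-p+1} i" "\<forall>j\<in>{1..n-p+1}. 1 \<le> i j \<and> i j \<le> m"
  shows "\<forall>A\<in>FRep n m r. \<forall>u\<in>Ubeta n r.
           act u A \<in> FRep n m r \<and>
           minor n p i (pathprod (act u A) k) = minor n p i (pathprod A k)"
proof (intro ballI conjI)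
  fix A u assume A: "A \<in> FRep n m r" and u: "u \<in> Ubeta n r"
  show "act u A \<in> FRep n m r" using act_in_FRep[OF A u] .
  have "unitriangular n (u (k + 1))" using u assms(3) unfolding Ubeta_def by auto
  then show "minor n p i (pathprod (act u A) k) = minor n p i (pathprod A k)"
    unfolding minor_def pathprod_act[OF A u assms(3)]
    using pathprod_carrier[OF A assms(3)] assms(2)
    by (intro det_submatrix_tail_rows_mult_unitriangular) (auto simp: unitriangular_def)
qed

end
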